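(* Let $f\in\mathcal{R}$ be nonzero and suppose that for every integer $p\ge2$ there is $\lambda_p\neq0$ with $U_pf=\lambda_pf$. Then all poles of $f$ equal $1$ (i.e. the level of $f$ is $L=1$), and \[f(x)=C\,\Big(x\frac{d}{dx}\Big)^k\Big(\frac{1}{1-x}\Big)\] for some $k\in\mathbb{N}=\{0,1,2,\dots\}$ and $C\in\mathbb{C}$. Consequently $\lambda_p=p^k$ for every $p$.
   Context: $\mathcal{R}$ denotes the real vector space of rational functions $f(x)=A(x)/B(x)$ with $A,B\in\mathbb{R}[x]$, $B(0)\neq 0$ and $\deg A<\deg B$. For $f\in\mathcal{R}$ with Taylor expansion $f(x)=\sum_{n\ge0}a_nx^n$ at $0$ and a positive integer $p$, the Hecke operator $U_p$ is defined by $U_pf(x)=\sum_{n\ge 0}a_{pn}x^n$. If all poles of $f$ are roots of unity, the level of $f$ is the least common multiple of the orders of these roots of unity. *)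

theory Defs
  imports "HOL-Computational_Algebra.Computational_Algebra" "HOL-Computational_Algebra.Polynomial_FPS"
begin

text \<open>A rational function f = A/B with B(0) \<noteq> 0 and deg A < deg B (an element of the space R).\<close>
definition in_R :: "real poly \<Rightarrow> real poly \<Rightarrow> bool" where
  "in_R A B \<longleftrightarrow> poly B 0 \<noteq> 0 \<and> degree A < degree B"

text \<open>Taylor expansion at 0 of A/B (as a formal power series; valid since B(0) \<noteq> 0).\<close>
definition taylor_rf :: "real poly \<Rightarrow> real poly \<Rightarrow> real fps" where
  "taylor_rf A B = fps_of_poly A / fps_of_poly B"

definition hecke_U :: "nat \<Rightarrow> 'a fps \<Rightarrow> 'a fps" where
  "hecke_U p F = Abs_fps (\<lambda>n. F $ (p * n))"

definition poles_rf :: "real poly \<Rightarrow> real poly \<Rightarrow> complex set" where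
  "poles_rf A B = {z. order z (map_poly complex_of_real A) < order z (map_poly complex_of_real B)}"

definition fps_complexify :: "real fps \<Rightarrow> complex fps" where
  "fps_complexify F = Abs_fps (\<lambda>n. complex_of_real (F $ n))"

end

theory Submission
  imports Defs
begin

text \<open>
Over \<complex>, the Taylor coefficients of a rational function are, for large n, an exponential
polynomial a(n) = \<Sum>\<alpha>. Q\<alpha>(n) \<alpha>^n, and the polynomials Q\<alpha> are determined by the sequence.
As a(p n) = \<Sum>\<alpha>. Q\<alpha>(p n) (\<alpha>^p)^n, the relation a(p n) = \<lambda>(p) a(n) says that the fibre sums
\<Sum>{Q\<alpha>(p x) | \<alpha>^p = \<beta>} equal \<lambda>(p) Q\<beta>(x). For p = 2 no fibre is empty, so squaring
permutes the finitely many frequencies and all of them are roots of unity, say \<alpha>^N = 1.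
For p = N + 1 every fibre is a point, so Q\<beta>(p x) = \<lambda>(p) Q\<beta>(x), which forces Q\<beta> to be a
monomial of one common degree k. Along multiples of N the sequence is then n^k times a
constant, whence \<lambda>(p) = p^k for all p and a(n) = a(1) n^k, i.e. f = a(1) (x d/dx)^k (1/(1 - x)).
Finally (1 - x)^(k+1) f is a polynomial, so 1 is the only possible pole.
\<close>

section \<open>Exponential polynomials\<close>

definition exp_poly :: "'a set \<Rightarrow> ('a \<Rightarrow> 'a poly) \<Rightarrow> nat \<Rightarrow> 'a::comm_semiring_1"
  where "exp_poly S Q n = (\<Sum>\<beta>\<in>S. poly (Q \<beta>) (of_nat n) * \<beta> ^ n)"

definition eventually_exp_poly :: "(nat \<Rightarrow> 'a::comm_semiring_1) \<Rightarrow> bool"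
  where "eventually_exp_poly s \<longleftrightarrow>
    (\<exists>S Q. finite S \<and> (\<forall>\<^sub>F n in sequentially. s n = exp_poly S Q n))"

lemma exp_poly_empty [simp]: "exp_poly {} Q n = 0"
  by (simp add: exp_poly_def)

lemma exp_poly_const: "exp_poly {b} (\<lambda>_. [:c:]) n = c * b ^ n"
  by (simp add: exp_poly_def)

lemma exp_poly_add:
  "exp_poly S Q1 n + exp_poly S Q2 n = exp_poly S (\<lambda>\<beta>. Q1 \<beta> + Q2 \<beta>) n"
  by (simp add: exp_poly_def sum.distrib algebra_simps)

lemma exp_poly_diff:
  fixes Q1 :: "'a::comm_ring_1 \<Rightarrow> 'a poly"
  shows "exp_poly S Q1 n - exp_poly S Q2 n = exp_poly S (\<lambda>\<beta>. Q1 \<beta> - Q2 \<beta>) n"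
  by (simp add: exp_poly_def sum_subtractf algebra_simps)

lemma exp_poly_smult: "c * exp_poly S Q n = exp_poly S (\<lambda>\<beta>. smult c (Q \<beta>)) n"
  by (simp add: exp_poly_def sum_distrib_left mult.assoc)

lemma exp_poly_extend:
  assumes "finite T" "S \<subseteq> T"
  shows "exp_poly T (\<lambda>\<beta>. if \<beta> \<in> S then Q \<beta> else 0) n = exp_poly S Q n"
  unfolding exp_poly_def by (rule sum.mono_neutral_cong_left[symmetric]) (use assms in auto)

lemma exp_poly_Suc:
  "exp_poly S Q (Suc n) = exp_poly S (\<lambda>\<beta>. smult \<beta> (Q \<beta> \<circ>\<^sub>p [:1, 1:])) n"
  by (simp add: exp_poly_def poly_pcompose algebra_simps)

lemma exp_poly_reindex:
  assumes "finite S"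
  shows "(\<Sum>\<alpha>\<in>S. poly (Q \<alpha>) (of_nat n) * f \<alpha> ^ n)
           = exp_poly (f ` S) (\<lambda>\<beta>. \<Sum>\<alpha>\<in>{\<alpha>\<in>S. f \<alpha> = \<beta>}. Q \<alpha>) n"
proof -
  have "exp_poly (f ` S) (\<lambda>\<beta>. \<Sum>\<alpha>\<in>{\<alpha>\<in>S. f \<alpha> = \<beta>}. Q \<alpha>) n
      = (\<Sum>\<beta>\<in>f ` S. \<Sum>\<alpha>\<in>{\<alpha>\<in>S. f \<alpha> = \<beta>}. poly (Q \<alpha>) (of_nat n) * f \<alpha> ^ n)"
    unfolding exp_poly_def by (auto simp: poly_sum sum_distrib_right intro!: sum.cong)
  also have "\<dots> = (\<Sum>\<alpha>\<in>S. poly (Q \<alpha>) (of_nat n) * f \<alpha> ^ n)"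
    by (rule sum.group) (use assms in auto)
  finally show ?thesis ..
qed

lemma exp_poly_dilate:
  assumes "finite S"
  shows "exp_poly S Q (p * n) = exp_poly ((\<lambda>\<alpha>. \<alpha> ^ p) ` S)
           (\<lambda>\<beta>. \<Sum>\<alpha>\<in>{\<alpha>\<in>S. \<alpha> ^ p = \<beta>}. Q \<alpha> \<circ>\<^sub>p [:0, of_nat p:]) n"
  using exp_poly_reindex[OF assms, of "\<lambda>\<alpha>. Q \<alpha> \<circ>\<^sub>p [:0, of_nat p:]" n "\<lambda>\<alpha>. \<alpha> ^ p"]
  by (simp add: exp_poly_def poly_pcompose mult_ac flip: power_mult)

section \<open>Uniqueness of the coefficient polynomials\<close>

text \<open>\<open>poly (shift_diff b c R) n * b ^ n\<close> is the image of \<open>poly R n * b ^ n\<close> under the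
  difference operator u(n) \<mapsto> u(n + 1) - c u(n).\<close>

definition shift_diff :: "'a \<Rightarrow> 'a \<Rightarrow> 'a poly \<Rightarrow> 'a::comm_ring_1 poly"
  where "shift_diff b c R = smult b (R \<circ>\<^sub>p [:1, 1:]) - smult c R"

lemma shift_diff_add: "shift_diff b c (P + R) = shift_diff b c P + shift_diff b c R"
  by (simp add: shift_diff_def pcompose_add smult_add_right)

lemma exp_poly_shift_diff:
  "exp_poly S (\<lambda>\<beta>. shift_diff \<beta> c (R \<beta>)) n = exp_poly S R (Suc n) - c * exp_poly S R n"
  by (simp add: shift_diff_def exp_poly_Suc exp_poly_smult exp_poly_diff)

lemma degree_shift_diff_le: "degree (shift_diff b c (R :: 'a::idom poly)) \<le> degree R"
proof -
  have "degree (R \<circ>\<^sub>p [:1, 1:]) = degree R" by (simp add: degree_pcompose)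
  then show ?thesis
    unfolding shift_diff_def by (metis degree_diff_le degree_smult_le le_trans)
qed

lemma coeff_shift_diff_degree:
  "coeff (shift_diff b c (R :: 'a::idom poly)) (degree R) = (b - c) * lead_coeff R"
  using lead_coeff_comp[of "[:1, 1::'a:]" R] degree_pcompose[of R "[:1, 1::'a:]"]
  by (simp add: shift_diff_def algebra_simps)

lemma length_coeffs_shift_diff_le:
  "length (coeffs (shift_diff b c (R :: 'a::idom poly))) \<le> length (coeffs R)"
  using degree_shift_diff_le[of b c R]
  by (cases "R = 0"; cases "shift_diff b c R = 0") (auto simp: length_coeffs shift_diff_def)

lemma length_coeffs_shift_diff:
  fixes R :: "'a::idom poly"
  assumes "b \<noteq> c"
  shows "length (coeffs (shift_diff b c R)) = length (coeffs R)"
proof (cases "R = 0")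
  case False
  then have "coeff (shift_diff b c R) (degree R) \<noteq> 0"
    using assms by (simp add: coeff_shift_diff_degree)
  then have "shift_diff b c R \<noteq> 0" "degree (shift_diff b c R) = degree R"
    using le_degree degree_shift_diff_le[of b c R] by fastforce+
  then show ?thesis using False by (simp add: length_coeffs)
qed (simp add: shift_diff_def)

lemma length_coeffs_shift_diff_less:
  fixes R :: "'a::idom poly"
  assumes "R \<noteq> 0"
  shows "length (coeffs (shift_diff b b R)) < length (coeffs R)"
proof (cases "shift_diff b b R = 0")
  case False
  have "degree (shift_diff b b R) \<noteq> degree R"
    using False coeff_shift_diff_degree[of b b R] by (metis diff_self leading_coeff_0_iff mult_zero_left)
  then have "degree (shift_diff b b R) < degree R"
    using degree_shift_diff_le[of b b R] by simp
  then show ?thesis using False assms by (simp add: length_coeffs)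
qed (use assms in simp)

lemma poly_eq_0_if_eventually_zero_at_nat:
  fixes R :: "'a::{idom, ring_char_0} poly"
  assumes "\<forall>\<^sub>F n in sequentially. poly R (of_nat n) = 0"
  shows "R = 0"
proof (rule ccontr)
  assume "R \<noteq> 0"
  obtain n0 where "\<forall>n\<ge>n0. poly R (of_nat n) = 0"
    using assms by (auto simp: eventually_sequentially)
  then have "of_nat ` {n0..} \<subseteq> {x. poly R x = 0}" by auto
  moreover have "infinite (of_nat ` {n0..} :: 'a set)"
    using finite_imageD[of "of_nat :: nat \<Rightarrow> 'a" "{n0..}"] by (auto simp: inj_on_def infinite_Ici)
  ultimately show False using poly_roots_finite[OF \<open>R \<noteq> 0\<close>] finite_subset by blast
qed

text \<open>Applying u(n) \<mapsto> u(n + 1) - b u(n) for a frequency b strictly shortens the coefficient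
  polynomial at b and keeps the length of all others, so induction on the total length
  reduces to a single frequency, where the polynomial has infinitely many roots.\<close>

lemma exp_poly_eventually_zero_imp_zero:
  fixes R :: "'a::field_char_0 \<Rightarrow> 'a poly"
  assumes "finite T" "0 \<notin> T" "\<forall>\<^sub>F n in sequentially. exp_poly T R n = 0"
  shows "\<forall>\<beta>\<in>T. R \<beta> = 0"
  using assms
proof (induction "\<Sum>\<beta>\<in>T. length (coeffs (R \<beta>))" arbitrary: R rule: less_induct)
  case less
  show ?case
  proof (rule ccontr)
    assume "\<not> (\<forall>\<beta>\<in>T. R \<beta> = 0)"
    then obtain b where b: "b \<in> T" "R b \<noteq> 0" by auto
    define R' where "R' = (\<lambda>\<beta>. shift_diff \<beta> b (R \<beta>))"
    have "\<forall>\<^sub>F n in sequentially. exp_poly T R (Suc n) = 0"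
      using eventually_sequentially_Suc[of "\<lambda>n. exp_poly T R n = 0"] less.prems(3) by blast
    with less.prems(3) have "\<forall>\<^sub>F n in sequentially. exp_poly T R (Suc n) = 0 \<and> exp_poly T R n = 0"
      by (simp add: eventually_conj_iff)
    then have "\<forall>\<^sub>F n in sequentially. exp_poly T R' n = 0"
      by eventually_elim (simp only: R'_def exp_poly_shift_diff, simp)
    moreover have "(\<Sum>\<beta>\<in>T. length (coeffs (R' \<beta>))) < (\<Sum>\<beta>\<in>T. length (coeffs (R \<beta>)))"
      using b less.prems(1) length_coeffs_shift_diff_less[OF b(2)]
      by (intro sum_strict_mono_ex1) (auto simp: R'_def length_coeffs_shift_diff_le)
    ultimately have "\<forall>\<beta>\<in>T. R' \<beta> = 0"
      using less.hyps less.prems(1,2) by blast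
    then have others: "R \<beta> = 0" if "\<beta> \<in> T" "\<beta> \<noteq> b" for \<beta>
      using that length_coeffs_shift_diff[of \<beta> b "R \<beta>"] by (simp add: R'_def)
    have "exp_poly T R n = poly (R b) (of_nat n) * b ^ n" for n
      unfolding exp_poly_def using b(1) less.prems(1) others
      by (subst sum.remove[of _ b]) (auto intro!: sum.neutral)
    then have "\<forall>\<^sub>F n in sequentially. poly (R b) (of_nat n) = 0"
      using less.prems(3) b(1) less.prems(2) by (auto elim: eventually_mono)
    then show False
      using poly_eq_0_if_eventually_zero_at_nat b(2) by blast
  qed
qed

lemma exp_poly_unique:
  fixes Q1 Q2 :: "'a::field_char_0 \<Rightarrow> 'a poly"
  assumes "finite S1" "finite S2" "0 \<notin> S1 \<union> S2"
    and "\<forall>\<^sub>F n in sequentially. exp_poly S1 Q1 n = exp_poly S2 Q2 n"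
  shows "(if \<beta> \<in> S1 then Q1 \<beta> else 0) = (if \<beta> \<in> S2 then Q2 \<beta> else 0)"
proof -
  define R where "R \<beta> = (if \<beta> \<in> S1 then Q1 \<beta> else 0) - (if \<beta> \<in> S2 then Q2 \<beta> else 0)" for \<beta>
  have "exp_poly (S1 \<union> S2) R n = exp_poly S1 Q1 n - exp_poly S2 Q2 n" for n
    unfolding R_def using assms(1,2)
    by (simp flip: exp_poly_diff add: exp_poly_extend)
  then have "\<forall>\<^sub>F n in sequentially. exp_poly (S1 \<union> S2) R n = 0"
    using assms(4) by (auto elim: eventually_mono)
  then have "\<forall>\<beta>\<in>S1 \<union> S2. R \<beta> = 0"
    using exp_poly_eventually_zero_imp_zero assms(1-3) by blast
  then show ?thesis by (cases "\<beta> \<in> S1 \<union> S2") (auto simp: R_def)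
qed

section \<open>Taylor coefficients of rational functions\<close>

lemma eventually_exp_poly_exp_poly: "finite S \<Longrightarrow> eventually_exp_poly (exp_poly S Q)"
  unfolding eventually_exp_poly_def by (intro exI[of _ S] exI[of _ Q]) simp

lemma eventually_exp_poly_cong:
  assumes "eventually_exp_poly s" "\<forall>\<^sub>F n in sequentially. t n = s n"
  shows "eventually_exp_poly t"
proof -
  obtain S Q where S: "finite S" and s: "\<forall>\<^sub>F n in sequentially. s n = exp_poly S Q n"
    using assms(1) unfolding eventually_exp_poly_def by blast
  from s assms(2) have "\<forall>\<^sub>F n in sequentially. t n = exp_poly S Q n"
    by eventually_elim simp
  with S show ?thesis unfolding eventually_exp_poly_def by blast
qed

lemma eventually_exp_poly_add:
  assumes "eventually_exp_poly s" "eventually_exp_poly t"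
  shows "eventually_exp_poly (\<lambda>n. s n + t n)"
proof -
  obtain S1 Q1 S2 Q2 where "finite S1" "finite S2"
    and s: "\<forall>\<^sub>F n in sequentially. s n = exp_poly S1 Q1 n"
    and t: "\<forall>\<^sub>F n in sequentially. t n = exp_poly S2 Q2 n"
    using assms unfolding eventually_exp_poly_def by blast
  from s t have "\<forall>\<^sub>F n in sequentially. s n + t n = exp_poly (S1 \<union> S2)
      (\<lambda>\<beta>. (if \<beta> \<in> S1 then Q1 \<beta> else 0) + (if \<beta> \<in> S2 then Q2 \<beta> else 0)) n"
    by eventually_elim (simp flip: exp_poly_add add: exp_poly_extend \<open>finite S1\<close> \<open>finite S2\<close>)
  then show ?thesis
    unfolding eventually_exp_poly_def using \<open>finite S1\<close> \<open>finite S2\<close> by blast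
qed

lemma eventually_exp_poly_cmult:
  assumes "eventually_exp_poly s"
  shows "eventually_exp_poly (\<lambda>n. c * s n)"
proof -
  obtain S Q where S: "finite S" and s: "\<forall>\<^sub>F n in sequentially. s n = exp_poly S Q n"
    using assms unfolding eventually_exp_poly_def by blast
  from s have "\<forall>\<^sub>F n in sequentially. c * s n = exp_poly S (\<lambda>\<beta>. smult c (Q \<beta>)) n"
    by eventually_elim (simp add: exp_poly_smult)
  with S show ?thesis unfolding eventually_exp_poly_def by blast
qed

lemma pcompose_monom: "monom c m \<circ>\<^sub>p q = smult c (q ^ m)"
  by (induction m) (simp_all add: monom_0 monom_Suc pcompose_pCons)

lemma coeff_shift_diff_monom:
  "coeff (shift_diff b c (monom e m)) j
     = b * e * of_nat (m choose j) - (if m = j then c * e else 0)"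
proof -
  have "coeff ([:1, 1:] ^ m) j = (of_nat (m choose j) :: 'a)"
    by (cases "j \<le> m")
       (simp_all add: coeff_linear_poly_power coeff_eq_0 degree_linear_power binomial_eq_0)
  then show ?thesis by (simp add: shift_diff_def pcompose_monom)
qed

lemma shift_diff_monom_leading:
  fixes b c q :: "'a::field_char_0"
  assumes "c \<noteq> 0"
  obtains P where "degree (shift_diff b c P) \<le> d" "coeff (shift_diff b c P) d = q"
proof -
  define P where "P = (if b = c then monom (q / (c * of_nat (Suc d))) (Suc d)
                        else monom (q / (b - c)) d)"
  have coeff_P: "coeff (shift_diff b c P) j = (if j = d then q else 0)" if "j \<ge> d" for j
  proof (cases "b = c")
    case True
    with assms that show ?thesis
      by (cases "j = d"; cases "j = Suc d")
         (auto simp: P_def coeff_shift_diff_monom binomial_eq_0 field_simps simp del: of_nat_Suc)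
  next
    case False
    then have "b - c \<noteq> 0" by simp
    have "b * (q / (b - c)) - c * (q / (b - c)) = (b - c) * (q / (b - c))"
      by (simp only: left_diff_distrib)
    also have "\<dots> = q" using \<open>b - c \<noteq> 0\<close> by simp
    finally have "b * (q / (b - c)) - c * (q / (b - c)) = q" .
    with False that show ?thesis
      by (auto simp: P_def coeff_shift_diff_monom binomial_eq_0)
  qed
  then have "degree (shift_diff b c P) \<le> d"
    by (intro degree_le) auto
  with that coeff_P[of d] show ?thesis by simp
qed

lemma shift_diff_surj:
  fixes Q :: "'a::field_char_0 poly"
  assumes "c \<noteq> 0"
  shows "\<exists>P. shift_diff b c P = Q"
proof (induction "degree Q" arbitrary: Q rule: less_induct)
  case less
  obtain P0 where P0: "degree (shift_diff b c P0) \<le> degree Q"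
    "coeff (shift_diff b c P0) (degree Q) = lead_coeff Q"
    using shift_diff_monom_leading assms by blast
  define Q1 where "Q1 = Q - shift_diff b c P0"
  show ?case
  proof (cases "Q1 = 0")
    case True
    then show ?thesis unfolding Q1_def by auto
  next
    case False
    have "degree Q1 \<le> degree Q" "coeff Q1 (degree Q) = 0"
      using P0 by (simp_all add: Q1_def degree_diff_le)
    then have "degree Q1 < degree Q"
      using False by (metis le_neq_implies_less leading_coeff_0_iff)
    then obtain P1 where "shift_diff b c P1 = Q1" using less by blast
    then have "shift_diff b c (P0 + P1) = Q" by (simp add: shift_diff_add Q1_def)
    then show ?thesis ..
  qed
qed

text \<open>A particular solution is obtained frequency by frequency from \<open>shift_diff_surj\<close>;
  the difference to it satisfies the homogeneous recurrence and is therefore geometric.\<close>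

lemma eventually_exp_poly_rec:
  fixes s t :: "nat \<Rightarrow> 'a::field_char_0"
  assumes "eventually_exp_poly s" "a \<noteq> 0" "\<And>n. t (Suc n) = a * t n + s (Suc n)"
  shows "eventually_exp_poly t"
proof -
  obtain S Q where S: "finite S" "\<forall>\<^sub>F n in sequentially. s n = exp_poly S Q n"
    using assms(1) unfolding eventually_exp_poly_def by blast
  have "\<forall>\<beta>. \<exists>P. shift_diff \<beta> a P = smult \<beta> (Q \<beta> \<circ>\<^sub>p [:1, 1:])"
    using shift_diff_surj[OF assms(2)] by blast
  then obtain P where P: "\<And>\<beta>. shift_diff \<beta> a (P \<beta>) = smult \<beta> (Q \<beta> \<circ>\<^sub>p [:1, 1:])"
    by metis
  have H: "exp_poly S P (Suc n) = a * exp_poly S P n + exp_poly S Q (Suc n)" for n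
    using exp_poly_shift_diff[of S a P n] by (simp add: P exp_poly_Suc)
  define d where "d n = t n - exp_poly S P n" for n
  have "\<forall>\<^sub>F n in sequentially. s (Suc n) = exp_poly S Q (Suc n)"
    using eventually_sequentially_Suc[of "\<lambda>n. s n = exp_poly S Q n"] S(2) by blast
  then have "\<forall>\<^sub>F n in sequentially. d (Suc n) = a * d n"
    by eventually_elim (simp add: d_def H assms(3) algebra_simps)
  then obtain n0 where n0: "\<And>n. n \<ge> n0 \<Longrightarrow> d (Suc n) = a * d n"
    by (auto simp: eventually_sequentially)
  define c where "c = d n0 / a ^ n0"
  have "d n = c * a ^ n" if "n \<ge> n0" for n
    using that
  proof (induction n rule: dec_induct)
    case (step n)
    then show ?case using n0 by simp
  qed (use assms(2) in \<open>simp add: c_def\<close>)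
  then have "\<forall>\<^sub>F n in sequentially. t n = exp_poly S P n + exp_poly {a} (\<lambda>_. [:c:]) n"
    unfolding eventually_sequentially by (auto simp: exp_poly_const d_def algebra_simps)
  moreover have "eventually_exp_poly (\<lambda>n. exp_poly S P n + exp_poly {a} (\<lambda>_. [:c:]) n)"
    using S(1) by (intro eventually_exp_poly_add eventually_exp_poly_exp_poly) auto
  ultimately show ?thesis by (rule eventually_exp_poly_cong[rotated])
qed

text \<open>For a root r of B, \<open>G = (x - r) F\<close> has the smaller denominator \<open>B / (x - r)\<close>, and
  F(n + 1) = (F(n) - G(n + 1)) / r.\<close>

lemma eventually_exp_poly_fps_rational:
  fixes A B :: "complex poly" and F :: "complex fps"
  assumes "F * fps_of_poly B = fps_of_poly A" "poly B 0 \<noteq> 0"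
  shows "eventually_exp_poly (\<lambda>n. F $ n)"
  using assms
proof (induction "degree B" arbitrary: B F A rule: less_induct)
  case less
  show ?case
  proof (cases "degree B = 0")
    case True
    define b where "b = coeff B 0"
    have "B = [:b:]" using degree_0_id[OF True] by (simp add: b_def)
    moreover have "b \<noteq> 0" using less.prems(2) by (simp add: b_def poly_0_coeff_0)
    ultimately have "F $ n * b = coeff A n" for n
      using arg_cong[OF less.prems(1), of "\<lambda>G. G $ n"] by (simp add: fps_of_poly_const)
    then have "F $ n = 0" if "n > degree A" for n
      using that \<open>b \<noteq> 0\<close> by (metis coeff_eq_0 mult_eq_0_iff)
    then have "\<forall>\<^sub>F n in sequentially. F $ n = exp_poly {} (\<lambda>_. 0) n"
      unfolding eventually_sequentially by (intro exI[of _ "Suc (degree A)"]) simp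
    then show ?thesis
      by (rule eventually_exp_poly_cong[OF eventually_exp_poly_exp_poly, rotated]) simp
  next
    case False
    then have "\<not> (\<exists>a l. a \<noteq> 0 \<and> l = 0 \<and> B = pCons a l)" by auto
    then obtain r where r: "poly B r = 0"
      using fundamental_theorem_of_algebra_alt by blast
    have "r \<noteq> 0" using r less.prems(2) by auto
    obtain B1 where B1: "B = [:-r, 1:] * B1"
      using r by (metis dvdE poly_eq_0_iff_dvd)
    then have "B1 \<noteq> 0" "poly B1 0 \<noteq> 0" using less.prems(2) by auto
    then have "degree B1 < degree B"
      using degree_mult_eq[of "[:-r, 1:]" B1] unfolding B1 by simp
    define G where "G = F * fps_of_poly [:-r, 1:]"
    have "G * fps_of_poly B1 = fps_of_poly A"
      using less.prems(1) unfolding B1 G_def fps_of_poly_mult by (simp only: mult.assoc)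
    then have G: "eventually_exp_poly (\<lambda>n. G $ n)"
      using less.hyps \<open>degree B1 < degree B\<close> \<open>poly B1 0 \<noteq> 0\<close> by blast
    have "F $ Suc n = (1 / r) * F $ n + (- (1 / r) * G $ Suc n)" for n
      using \<open>r \<noteq> 0\<close> by (simp add: G_def fps_of_poly_pCons field_simps)
    with \<open>r \<noteq> 0\<close> show ?thesis
      by (intro eventually_exp_poly_rec[OF eventually_exp_poly_cmult[OF G, of "- (1 / r)"], of "1 / r"]) auto
  qed
qed

section \<open>Exponential polynomials that are dilation eigensequences\<close>

text \<open>The frequency 0 only contributes at \<open>n = 0\<close> (where \<open>0 ^ 0 = 1\<close>) and can therefore be
  dropped from an eventual representation.\<close>

lemma eventually_exp_poly_normal_form:
  fixes s :: "nat \<Rightarrow> 'a::idom"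
  assumes "eventually_exp_poly s"
  obtains S Q where "finite S" "0 \<notin> S" "\<forall>\<alpha>\<in>S. Q \<alpha> \<noteq> 0"
    "\<forall>\<^sub>F n in sequentially. s n = exp_poly S Q n"
proof -
  obtain S0 Q where "finite S0" and s: "\<forall>\<^sub>F n in sequentially. s n = exp_poly S0 Q n"
    using assms unfolding eventually_exp_poly_def by blast
  define S where "S = {\<alpha>\<in>S0. \<alpha> \<noteq> 0 \<and> Q \<alpha> \<noteq> 0}"
  have restrict: "exp_poly S0 Q n = exp_poly S Q n" if "n \<ge> 1" for n
    unfolding exp_poly_def S_def using \<open>finite S0\<close> that
    by (intro sum.mono_neutral_right) auto
  from s eventually_ge_at_top[of "1::nat"] have "\<forall>\<^sub>F n in sequentially. s n = exp_poly S Q n"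
    by eventually_elim (simp add: restrict)
  moreover have "finite S" "0 \<notin> S" "\<forall>\<alpha>\<in>S. Q \<alpha> \<noteq> 0"
    using \<open>finite S0\<close> by (auto simp: S_def)
  ultimately show ?thesis using that by blast
qed

lemma exp_poly_dilation_eigen_fibre:
  fixes Q :: "'a::field_char_0 \<Rightarrow> 'a poly"
  assumes "finite S" "0 \<notin> S" "\<beta> \<in> S"
    and "\<forall>\<^sub>F n in sequentially. exp_poly S Q (p * n) = l * exp_poly S Q n"
  shows "(\<Sum>\<alpha>\<in>{\<alpha>\<in>S. \<alpha> ^ p = \<beta>}. Q \<alpha> \<circ>\<^sub>p [:0, of_nat p:]) = smult l (Q \<beta>)"
proof -
  let ?D = "\<lambda>\<gamma>. \<Sum>\<alpha>\<in>{\<alpha>\<in>S. \<alpha> ^ p = \<gamma>}. Q \<alpha> \<circ>\<^sub>p [:0, of_nat p:]"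
  have "\<forall>\<^sub>F n in sequentially.
      exp_poly ((\<lambda>\<alpha>. \<alpha> ^ p) ` S) ?D n = exp_poly S (\<lambda>\<gamma>. smult l (Q \<gamma>)) n"
    using assms(4) by (simp add: exp_poly_dilate[OF assms(1)] exp_poly_smult)
  moreover have "0 \<notin> (\<lambda>\<alpha>. \<alpha> ^ p) ` S \<union> S" using assms(2) by auto
  ultimately have "(if \<beta> \<in> (\<lambda>\<alpha>. \<alpha> ^ p) ` S then ?D \<beta> else 0)
      = (if \<beta> \<in> S then smult l (Q \<beta>) else 0)"
    by (intro exp_poly_unique) (use assms(1) in auto)
  then have "(if \<beta> \<in> (\<lambda>\<alpha>. \<alpha> ^ p) ` S then ?D \<beta> else 0) = smult l (Q \<beta>)"
    using assms(3) by simp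
  moreover have "?D \<beta> = 0" if "\<beta> \<notin> (\<lambda>\<alpha>. \<alpha> ^ p) ` S"
    using that by (auto intro: sum.neutral)
  ultimately show ?thesis by metis
qed

lemma roots_of_unity_if_subset_power_image:
  fixes S :: "'a::idom set"
  assumes "finite S" "0 \<notin> S" "m \<ge> 2" "S \<subseteq> (\<lambda>\<alpha>. \<alpha> ^ m) ` S"
  obtains N where "N > 0" "\<forall>\<alpha>\<in>S. \<alpha> ^ N = 1"
proof -
  have img: "(\<lambda>\<alpha>. \<alpha> ^ m) ` S = S"
    using card_seteq[OF finite_imageI[OF assms(1)] assms(4)] card_image_le[OF assms(1)] by auto
  have orbit: "\<alpha> ^ (m ^ i) \<in> S" if "\<alpha> \<in> S" for \<alpha> i
  proof (induction i)
    case (Suc i)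
    have "\<alpha> ^ (m ^ Suc i) = (\<alpha> ^ (m ^ i)) ^ m" by (metis power_Suc2 power_mult)
    then show ?case using Suc img by (metis image_eqI)
  qed (use that in simp)
  have "\<exists>e>0. \<alpha> ^ e = 1" if "\<alpha> \<in> S" for \<alpha>
  proof -
    have "range (\<lambda>i. \<alpha> ^ (m ^ i)) \<subseteq> S" using orbit that by auto
    then have "\<not> inj (\<lambda>i. \<alpha> ^ (m ^ i))"
      using assms(1) finite_subset range_inj_infinite by blast
    then obtain i j where "i < j" "\<alpha> ^ (m ^ i) = \<alpha> ^ (m ^ j)"
      unfolding inj_def by (metis linorder_neqE_nat)
    moreover have "m ^ i < m ^ j" using \<open>i < j\<close> assms(3) by simp
    moreover have "\<alpha> ^ (m ^ i) * \<alpha> ^ (m ^ j - m ^ i) = \<alpha> ^ (m ^ j)"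
      using \<open>m ^ i < m ^ j\<close> by (simp flip: power_add)
    ultimately have "\<alpha> ^ (m ^ i) * \<alpha> ^ (m ^ j - m ^ i) = \<alpha> ^ (m ^ i) * 1"
      by simp
    moreover have "\<alpha> ^ (m ^ i) \<noteq> 0" using that assms(2) by auto
    ultimately show ?thesis using \<open>m ^ i < m ^ j\<close> by (intro exI[of _ "m ^ j - m ^ i"]) auto
  qed
  then obtain e where e: "\<And>\<alpha>. \<alpha> \<in> S \<Longrightarrow> e \<alpha> > 0 \<and> \<alpha> ^ e \<alpha> = 1" by metis
  have "\<alpha> ^ (\<Prod>\<alpha>\<in>S. e \<alpha>) = 1" if \<alpha>: "\<alpha> \<in> S" for \<alpha>
  proof -
    obtain c where "(\<Prod>\<alpha>\<in>S. e \<alpha>) = e \<alpha> * c"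
      using dvd_prodI[OF assms(1) \<alpha>, of e] by (auto elim: dvdE)
    then show ?thesis using e[OF \<alpha>] by (simp add: power_mult)
  qed
  moreover have "(\<Prod>\<alpha>\<in>S. e \<alpha>) > 0" using e by (simp add: prod_pos)
  ultimately show ?thesis using that by blast
qed

lemma of_nat_power_eq_iff_exp:
  assumes "p \<ge> 2"
  shows "(of_nat p ^ i :: 'a::semiring_char_0) = of_nat p ^ j \<longleftrightarrow> i = j"
  using assms by (metis of_nat_eq_iff of_nat_power power_inject_exp Suc_1 Suc_le_lessD)

lemma pcompose_scale_eq_smult_imp_monom:
  fixes Q :: "'a::field_char_0 poly"
  assumes "Q \<noteq> 0" "p \<ge> 2" "Q \<circ>\<^sub>p [:0, of_nat p:] = smult l Q"
  shows "l = of_nat p ^ degree Q" "Q = monom (lead_coeff Q) (degree Q)"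
proof -
  have coeff: "of_nat p ^ j * coeff Q j = l * coeff Q j" for j
    using arg_cong[OF assms(3), of "\<lambda>P. coeff P j"] by (simp add: coeff_pcompose_linear)
  show l: "l = of_nat p ^ degree Q"
    using coeff[of "degree Q"] assms(1) by simp
  have "coeff Q j = 0" if "j \<noteq> degree Q" for j
    using coeff[of j] that of_nat_power_eq_iff_exp[OF assms(2), of j "degree Q"] l by auto
  then show "Q = monom (lead_coeff Q) (degree Q)"
    by (intro poly_eqI) (auto simp: coeff_monom)
qed

lemma exp_poly_dilation_eigen_monomials:
  fixes Q :: "'a::field_char_0 \<Rightarrow> 'a poly" and l :: "nat \<Rightarrow> 'a"
  assumes "finite S" "0 \<notin> S" "\<forall>\<alpha>\<in>S. Q \<alpha> \<noteq> 0"
    and "\<And>p. p \<ge> 2 \<Longrightarrow> l p \<noteq> 0"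
    and "\<And>p. p \<ge> 2 \<Longrightarrow>
           \<forall>\<^sub>F n in sequentially. exp_poly S Q (p * n) = l p * exp_poly S Q n"
  obtains N k where "N > 0" "\<forall>\<alpha>\<in>S. \<alpha> ^ N = 1"
    "\<forall>\<alpha>\<in>S. Q \<alpha> = monom (lead_coeff (Q \<alpha>)) k"
proof -
  note fibre = exp_poly_dilation_eigen_fibre[OF assms(1,2) _ assms(5)]
  have "S \<subseteq> (\<lambda>\<alpha>. \<alpha> ^ 2) ` S"
  proof
    fix \<beta> assume "\<beta> \<in> S"
    then have "(\<Sum>\<alpha>\<in>{\<alpha>\<in>S. \<alpha> ^ 2 = \<beta>}. Q \<alpha> \<circ>\<^sub>p [:0, of_nat 2:]) \<noteq> 0"
      using fibre[of \<beta> 2] assms(3,4) by simp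
    then show "\<beta> \<in> (\<lambda>\<alpha>. \<alpha> ^ 2) ` S"
      by (metis (mono_tags, lifting) empty_Collect_eq image_eqI sum.empty)
  qed
  then obtain N where N: "N > 0" "\<forall>\<alpha>\<in>S. \<alpha> ^ N = 1"
    using roots_of_unity_if_subset_power_image[OF assms(1,2)] by blast
  define P where "P = Suc N"
  have "P \<ge> 2" using N(1) by (simp add: P_def)
  have "{\<alpha>\<in>S. \<alpha> ^ P = \<beta>} = {\<beta>}" if "\<beta> \<in> S" for \<beta>
    using N(2) that by (auto simp: P_def)
  then have "Q \<beta> \<circ>\<^sub>p [:0, of_nat P:] = smult (l P) (Q \<beta>)" if "\<beta> \<in> S" for \<beta>
    using fibre[OF that \<open>P \<ge> 2\<close>] that by simp
  then have mon: "l P = of_nat P ^ degree (Q \<beta>)" "Q \<beta> = monom (lead_coeff (Q \<beta>)) (degree (Q \<beta>))"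
    if "\<beta> \<in> S" for \<beta>
    using pcompose_scale_eq_smult_imp_monom assms(3) that \<open>P \<ge> 2\<close> by blast+
  have "\<exists>k. \<forall>\<beta>\<in>S. degree (Q \<beta>) = k"
  proof (cases "S = {}")
    case False
    then obtain \<alpha> where "\<alpha> \<in> S" by auto
    then have "degree (Q \<beta>) = degree (Q \<alpha>)" if "\<beta> \<in> S" for \<beta>
      using mon(1) that of_nat_power_eq_iff_exp[OF \<open>P \<ge> 2\<close>] by metis
    then show ?thesis by blast
  qed simp
  then show ?thesis using that N mon(2) by metis
qed

lemma eventually_dilation_transfer:
  assumes "\<forall>\<^sub>F n in sequentially. a n = b n" "p \<ge> 1" "\<And>n. a (p * n) = l * a n"
  shows "\<forall>\<^sub>F n in sequentially. b (p * n) = l * b n"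
proof -
  obtain n0 where n0: "\<And>n. n \<ge> n0 \<Longrightarrow> a n = b n"
    using assms(1) by (auto simp: eventually_sequentially)
  have "b (p * n) = l * b n" if "n \<ge> n0" for n
  proof -
    have "n \<le> p * n" using assms(2) by simp
    then have "b (p * n) = a (p * n)" using that by (intro n0[symmetric]) linarith
    also have "\<dots> = l * b n" using assms(3) n0[OF that] by simp
    finally show ?thesis .
  qed
  then show ?thesis by (auto simp: eventually_sequentially)
qed

lemma eventually_exp_poly_dilation_eigen_powers:
  fixes a l :: "nat \<Rightarrow> 'a::field_char_0"
  assumes "eventually_exp_poly a" "a 1 \<noteq> 0"
    and "\<And>p. p \<ge> 2 \<Longrightarrow> l p \<noteq> 0"
    and "\<And>p n. p \<ge> 2 \<Longrightarrow> a (p * n) = l p * a n"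
  shows "\<exists>k. \<forall>p\<ge>2. l p = of_nat p ^ k"
proof -
  obtain S Q where S: "finite S" "0 \<notin> S" "\<forall>\<alpha>\<in>S. Q \<alpha> \<noteq> 0"
    and a: "\<forall>\<^sub>F n in sequentially. a n = exp_poly S Q n"
    using eventually_exp_poly_normal_form[OF assms(1)] by blast
  have dilation: "\<forall>\<^sub>F n in sequentially. exp_poly S Q (p * n) = l p * exp_poly S Q n"
    if "p \<ge> 2" for p
    by (rule eventually_dilation_transfer[OF a _ assms(4)[OF that]]) (use that in simp)
  obtain n0 where n0: "\<And>n. n \<ge> n0 \<Longrightarrow> a n = exp_poly S Q n"
    using a by (auto simp: eventually_sequentially)
  obtain N k where N: "N > 0" "\<forall>\<alpha>\<in>S. \<alpha> ^ N = 1"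
    and mon: "\<forall>\<alpha>\<in>S. Q \<alpha> = monom (lead_coeff (Q \<alpha>)) k"
    by (rule exp_poly_dilation_eigen_monomials[OF S assms(3) dilation])
  have along_N: "exp_poly S Q (N * n) = of_nat (N * n) ^ k * (\<Sum>\<alpha>\<in>S. lead_coeff (Q \<alpha>))" for n
    unfolding exp_poly_def sum_distrib_left
    by (intro sum.cong refl, subst mon[rule_format]) (use N(2) in \<open>auto simp: poly_monom power_mult\<close>)
  define n where "n = Suc n0"
  have nonzero: "a m \<noteq> 0" if "m \<ge> 1" for m
    using assms(2) assms(3)[of m] assms(4)[of m 1] that by (cases "m = 1") auto
  have "l p = of_nat p ^ k" if "p \<ge> 2" for p
  proof -
    have "1 \<le> N" "1 \<le> N * p" using N(1) that by simp_all
    then have "N * n \<ge> n0" "N * (p * n) \<ge> n0"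
      using mult_le_mono1[of 1 N n] mult_le_mono1[of 1 "N * p" n]
      by (simp_all add: n_def mult.assoc distrib_left)
    then have "l p * a (N * n) = of_nat p ^ k * a (N * n)"
      using assms(4)[OF that, of "N * n"] n0 along_N[of "p * n"] along_N[of n]
      by (simp add: mult_ac power_mult_distrib)
    then show ?thesis using nonzero[of "N * n"] N(1) by (simp add: n_def)
  qed
  then show ?thesis by blast
qed

section \<open>Hecke eigenfunctions\<close>

lemma fps_complexify_nth [simp]: "fps_complexify F $ n = complex_of_real (F $ n)"
  by (simp add: fps_complexify_def)

lemma fps_complexify_mult: "fps_complexify (F * G) = fps_complexify F * fps_complexify G"
  by (rule fps_ext) (simp add: fps_mult_nth)

lemma fps_complexify_fps_of_poly:
  "fps_complexify (fps_of_poly P) = fps_of_poly (map_poly complex_of_real P)"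
  by (rule fps_ext) (simp add: coeff_map_poly)

lemma fps_complexify_rational:
  assumes "F * fps_of_poly B = fps_of_poly A"
  shows "fps_complexify F * fps_of_poly (map_poly complex_of_real B)
           = fps_of_poly (map_poly complex_of_real A)"
  using arg_cong[OF assms, of fps_complexify]
  by (simp add: fps_complexify_mult fps_complexify_fps_of_poly)

lemma taylor_rf_mult:
  assumes "poly B 0 \<noteq> 0"
  shows "taylor_rf A B * fps_of_poly B = fps_of_poly A"
proof -
  have "fps_of_poly B $ 0 \<noteq> 0" using assms by (simp add: poly_0_coeff_0)
  then show ?thesis
    by (simp add: taylor_rf_def fps_divide_unit mult.assoc inverse_mult_eq_1)
qed

lemma hecke_U_eigen_nth:
  fixes F :: "'a::comm_ring_1 fps"
  assumes "hecke_U p F = fps_const l * F"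
  shows "F $ (p * n) = l * F $ n"
  using arg_cong[OF assms, of "\<lambda>G. G $ n"] by (simp add: hecke_U_def fps_mult_left_const_nth)

lemma fps_of_poly_one_minus_X: "fps_of_poly [:1, -1:] = (1 - fps_X :: 'a::comm_ring_1 fps)"
  by (simp add: fps_of_poly_pCons fps_const_neg[symmetric] algebra_simps)

lemma proper_fraction_constant_tail:
  fixes F :: "'a::field fps"
  assumes "F * fps_of_poly B = fps_of_poly A" "degree A < degree B"
    and "\<And>n. n \<ge> 1 \<Longrightarrow> F $ n = c"
  shows "F $ 0 = c"
proof (rule ccontr)
  assume "F $ 0 \<noteq> c"
  have "F * (1 - fps_X) = fps_of_poly [:F $ 0, c - F $ 0:]"
  proof (rule fps_ext)
    fix n
    show "(F * (1 - fps_X)) $ n = fps_of_poly [:F $ 0, c - F $ 0:] $ n"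
      using assms(3)[of n] assms(3)[of "n - 1"]
      by (cases n; cases "n - 1") (auto simp: algebra_simps coeff_pCons)
  qed
  have "fps_of_poly (A * [:1, -1:]) = F * fps_of_poly B * (1 - fps_X)"
    using assms(1) by (simp add: fps_of_poly_mult fps_of_poly_one_minus_X)
  also have "\<dots> = F * (1 - fps_X) * fps_of_poly B" by (simp only: mult_ac)
  also have "\<dots> = fps_of_poly ([:F $ 0, c - F $ 0:] * B)"
    using \<open>F * (1 - fps_X) = _\<close> by (simp add: fps_of_poly_mult)
  finally have "A * [:1, -1:] = [:F $ 0, c - F $ 0:] * B"
    by (simp only: fps_of_poly_eq_iff)
  moreover have "degree (A * [:1, -1:]) \<le> degree A + 1"
    using degree_mult_le[of A "[:1, -1:]"] by simp
  moreover have "degree ([:F $ 0, c - F $ 0:] * B) = degree B + 1"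
    using \<open>F $ 0 \<noteq> c\<close> assms(2) by (subst degree_mult_eq) auto
  ultimately show False using assms(2) by simp
qed

lemma proper_fraction_dilation_nth_1_neq_0:
  fixes F :: "'a::field fps"
  assumes "F * fps_of_poly B = fps_of_poly A" "degree A < degree B" "A \<noteq> 0"
    and "\<And>p. p \<ge> 2 \<Longrightarrow> F $ p = l p * F $ 1"
  shows "F $ 1 \<noteq> 0"
proof
  assume "F $ 1 = 0"
  then have tail: "F $ n = 0" if "n \<ge> 1" for n
    using assms(4)[of n] that by (cases "n = 1") auto
  then have "F $ 0 = 0"
    using proper_fraction_constant_tail[OF assms(1,2)] by blast
  have "F = 0"
  proof (rule fps_ext)
    fix n show "F $ n = 0 $ n" using tail \<open>F $ 0 = 0\<close> by (cases n) auto
  qed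
  then show False using assms(1,3) fps_of_poly_eq_iff[of A 0] by simp
qed

lemma proper_fraction_dilation_power_coeffs:
  fixes F :: "'a::field_char_0 fps"
  assumes "F * fps_of_poly B = fps_of_poly A" "degree A < degree B"
    and "\<And>p n. p \<ge> 2 \<Longrightarrow> F $ (p * n) = of_nat p ^ k * F $ n"
  shows "F $ n = F $ 1 * of_nat n ^ k"
proof -
  have tail: "F $ m = F $ 1 * of_nat m ^ k" if "m \<ge> 2" for m
    using assms(3)[of m 1] that by simp
  have zero: "F $ 0 = F $ 1 * of_nat 0 ^ k"
  proof (cases "k = 0")
    case True
    have "F $ 0 = F $ 1"
    proof (rule proper_fraction_constant_tail[OF assms(1,2)])
      fix m :: nat assume "m \<ge> 1"
      then show "F $ m = F $ 1" using tail[of m] True by (cases "m = 1") auto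
    qed
    with True show ?thesis by simp
  next
    case False
    have "2 ^ k * F $ 0 = F $ 0" using assms(3)[of 2 0] by simp
    moreover have "(2 ^ k :: 'a) \<noteq> 1"
      using False of_nat_eq_iff[of "2 ^ k" 1, where 'a = 'a] by simp
    ultimately show ?thesis using False by simp
  qed
  consider "n = 0" | "n = 1" | "n \<ge> 2" by linarith
  then show ?thesis using zero tail[of n] by cases auto
qed

lemma rational_fps_dilation_eigen_powers:
  fixes F :: "real fps" and A B :: "real poly" and lam :: "nat \<Rightarrow> real"
  assumes "F * fps_of_poly B = fps_of_poly A" "poly B 0 \<noteq> 0" "degree A < degree B" "A \<noteq> 0"
    and "\<And>p. p \<ge> 2 \<Longrightarrow> lam p \<noteq> 0"
    and "\<And>p n. p \<ge> 2 \<Longrightarrow> F $ (p * n) = lam p * F $ n"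
  obtains k where "\<forall>p\<ge>2. lam p = real p ^ k" "\<forall>n. F $ n = F $ 1 * real n ^ k"
proof -
  have "F $ 1 \<noteq> 0"
    by (rule proper_fraction_dilation_nth_1_neq_0[OF assms(1,3,4), of lam])
       (use assms(6)[of _ 1] in simp)
  have "poly (map_poly complex_of_real B) 0 \<noteq> 0"
    using assms(2) by (simp add: poly_0_coeff_0 coeff_map_poly)
  then have "eventually_exp_poly (\<lambda>n. fps_complexify F $ n)"
    by (rule eventually_exp_poly_fps_rational[OF fps_complexify_rational[OF assms(1)]])
  then have "\<exists>k. \<forall>p\<ge>2. complex_of_real (lam p) = of_nat p ^ k"
    by (rule eventually_exp_poly_dilation_eigen_powers[where l = "\<lambda>p. complex_of_real (lam p)"])
       (use \<open>F $ 1 \<noteq> 0\<close> assms(5,6) in simp_all)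
  then obtain k where k: "\<forall>p\<ge>2. complex_of_real (lam p) = of_nat p ^ k" by blast
  have lam: "\<forall>p\<ge>2. lam p = real p ^ k"
  proof (intro allI impI)
    fix p :: nat assume "p \<ge> 2"
    then have "complex_of_real (lam p) = complex_of_real (real p ^ k)" using k by simp
    then show "lam p = real p ^ k" by (simp only: of_real_eq_iff)
  qed
  moreover have "F $ n = F $ 1 * real n ^ k" for n
    by (rule proper_fraction_dilation_power_coeffs[OF assms(1,3)]) (simp add: assms(6) lam)
  ultimately show ?thesis using that by blast
qed

lemma fps_XD_power_inverse_one_minus_X_nth:
  "(fps_XD ^^ k) (inverse (1 - fps_X)) $ n = (of_nat n ^ k :: 'a::field)"
  by (induction k) (simp_all add: fps_inverse_one_minus_fps_X)

lemma one_minus_X_mult_deriv_power: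
  "(1 - fps_X) * fps_deriv ((1 - fps_X) ^ m) = - of_nat m * (1 - fps_X :: 'a::comm_ring_1 fps) ^ m"
proof (induction m)
  case (Suc m)
  have "fps_deriv ((1 - fps_X) ^ Suc m)
      = (1 - fps_X) * fps_deriv ((1 - fps_X :: 'a fps) ^ m) - (1 - fps_X) ^ m"
    by (simp add: algebra_simps)
  then have "(1 - fps_X) * fps_deriv ((1 - fps_X) ^ Suc m)
      = (1 - fps_X) * ((1 - fps_X) * fps_deriv ((1 - fps_X :: 'a fps) ^ m)) - (1 - fps_X) ^ Suc m"
    by (simp only: right_diff_distrib power_Suc)
  also have "\<dots> = - of_nat (Suc m) * (1 - fps_X) ^ Suc m"
    unfolding Suc.IH by (simp add: algebra_simps)
  finally show ?case .
qed simp

lemma fps_XD_rational: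
  fixes G :: "'a::idom fps"
  assumes "(1 - fps_X) ^ m * G = fps_of_poly N"
  shows "(1 - fps_X) ^ Suc m * fps_XD G
           = fps_of_poly ([:0, 1:] * ([:1, -1:] * pderiv N + smult (of_nat m) N))"
proof -
  have ring_identity: "Y * D * dG = Y * P + c * N'"
    if "D * dG + E * G = P" "Y * E = - c * D" "D * G = N'" for Y D dG E P c N' :: "'a fps"
  proof -
    have "Y * D * dG = Y * (P - E * G)" using that(1) by (simp add: eq_diff_eq mult.assoc)
    also have "\<dots> = Y * P - (Y * E) * G" by (simp add: algebra_simps)
    also have "\<dots> = Y * P + c * (D * G)" using that(2) by (simp add: algebra_simps)
    finally show ?thesis using that(3) by simp
  qed
  have "(1 - fps_X) ^ m * fps_deriv G + fps_deriv ((1 - fps_X) ^ m) * G = fps_of_poly (pderiv N)"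
    using arg_cong[OF assms, of fps_deriv] by (simp add: fps_of_poly_pderiv)
  then have "(1 - fps_X) ^ Suc m * fps_deriv G = (1 - fps_X) * fps_of_poly (pderiv N) + of_nat m * fps_of_poly N"
    using ring_identity[OF _ one_minus_X_mult_deriv_power[of m] assms] unfolding power_Suc by blast
  then have "(1 - fps_X) ^ Suc m * fps_XD G
      = fps_X * ((1 - fps_X) * fps_of_poly (pderiv N) + of_nat m * fps_of_poly N)"
    by (simp add: fps_XD_def mult_ac)
  also have "\<dots> = fps_of_poly ([:0, 1:] * ([:1, -1:] * pderiv N + smult (of_nat m) N))"
    by (simp only: fps_of_poly_mult fps_of_poly_add fps_of_poly_smult fps_of_poly_one_minus_X
                   fps_of_poly_fps_X fps_of_nat)
  finally show ?thesis .
qed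

lemma fps_XD_power_inverse_one_minus_X_rational:
  "\<exists>N. (1 - fps_X) ^ Suc k * (fps_XD ^^ k) (inverse (1 - fps_X :: 'a::field fps)) = fps_of_poly N"
proof (induction k)
  case 0
  have "(1 - fps_X) * inverse (1 - fps_X :: 'a fps) = 1"
    by (rule inverse_mult_eq_1') simp
  then show ?case by (intro exI[of _ 1]) simp
next
  case (Suc k)
  then obtain N
    where "(1 - fps_X) ^ Suc k * (fps_XD ^^ k) (inverse (1 - fps_X :: 'a fps)) = fps_of_poly N"
    by blast
  from fps_XD_rational[OF this] show ?case unfolding funpow.simps(2) o_apply by (rule exI)
qed

lemma fps_complexify_eq_XD_power:
  assumes "\<And>n. F $ n = c * real n ^ k"
  shows "fps_complexify F = fps_const (complex_of_real c) * (fps_XD ^^ k) (inverse (1 - fps_X))"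
  by (rule fps_ext) (simp add: assms fps_XD_power_inverse_one_minus_X_nth)

lemma poly_identity_of_fps_identity:
  fixes A B N :: "'a::comm_ring_1 poly"
  assumes "F * fps_of_poly B = fps_of_poly A" "(1 - fps_X) ^ m * G = fps_of_poly N"
    and "F = fps_const C * G"
  shows "A * [:1, -1:] ^ m = smult C N * B"
proof -
  have "fps_of_poly (A * [:1, -1:] ^ m) = F * fps_of_poly B * (1 - fps_X) ^ m"
    using assms(1) by (simp add: fps_of_poly_mult fps_of_poly_power fps_of_poly_one_minus_X)
  also have "\<dots> = fps_const C * ((1 - fps_X) ^ m * G) * fps_of_poly B"
    using assms(3) by (simp only: mult_ac)
  also have "\<dots> = fps_of_poly (smult C N * B)"
    using assms(2) by (simp add: fps_of_poly_mult fps_of_poly_smult)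
  finally show ?thesis by (simp only: fps_of_poly_eq_iff)
qed

lemma order_le_if_mult_eq:
  fixes A B N q :: "'a::idom poly"
  assumes "A * q = N * B" "A \<noteq> 0" "poly q z \<noteq> 0"
  shows "order z B \<le> order z A"
proof -
  have "A * q \<noteq> 0" using assms(2,3) by auto
  then have "order z (A * q) = order z A" by (simp add: order_mult order_0I[OF assms(3)])
  moreover have "order z (N * B) = order z N + order z B"
    using \<open>A * q \<noteq> 0\<close> assms(1) by (simp add: order_mult)
  ultimately show ?thesis using assms(1) by simp
qed

lemma poles_rf_subset_one:
  assumes "A \<noteq> 0"
    and "map_poly complex_of_real A * [:1, -1:] ^ m = N * map_poly complex_of_real B"
  shows "poles_rf A B \<subseteq> {1}"
proof
  fix z assume z: "z \<in> poles_rf A B"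
  have "map_poly complex_of_real A \<noteq> 0" using assms(1) by (simp add: map_poly_eq_0_iff)
  moreover have "poly ([:1, -1:] ^ m) z \<noteq> 0" if "z \<noteq> 1" using that by simp
  ultimately show "z \<in> {1}"
    using z order_le_if_mult_eq[OF assms(2)] by (force simp: poles_rf_def)
qed

theorem mainTheorem3:
  fixes A B :: "real poly" and lam :: "nat \<Rightarrow> real"
  assumes "in_R A B"
    and "A \<noteq> 0"
    and "\<forall>p::nat. p \<ge> 2 \<longrightarrow> lam p \<noteq> 0 \<and>
           hecke_U p (taylor_rf A B) = fps_const (lam p) * taylor_rf A B"
  shows "poles_rf A B \<subseteq> {1} \<and>
         (\<exists>(k::nat) (C::complex).
            fps_complexify (taylor_rf A B)
              = fps_const C * (fps_XD ^^ k) (inverse (1 - fps_X)) \<and>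
            (\<forall>p::nat. p \<ge> 2 \<longrightarrow> lam p = real p ^ k))"
proof -
  define F where "F = taylor_rf A B"
  have B0: "poly B 0 \<noteq> 0" and deg: "degree A < degree B" using assms(1) by (auto simp: in_R_def)
  have FB: "F * fps_of_poly B = fps_of_poly A" using taylor_rf_mult[OF B0] by (simp add: F_def)
  have lam_nonzero: "lam p \<noteq> 0" and eigen: "F $ (p * n) = lam p * F $ n" if "p \<ge> 2" for p n
    using hecke_U_eigen_nth[of p F "lam p" n] assms(3) that by (simp_all add: F_def)
  obtain k where lam: "\<forall>p\<ge>2. lam p = real p ^ k" and coeffs: "\<forall>n. F $ n = F $ 1 * real n ^ k"
    by (rule rational_fps_dilation_eigen_powers[OF FB B0 deg assms(2) lam_nonzero eigen])
  define C where "C = complex_of_real (F $ 1)"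
  have series: "fps_complexify F = fps_const C * (fps_XD ^^ k) (inverse (1 - fps_X))"
    unfolding C_def by (rule fps_complexify_eq_XD_power[OF coeffs[rule_format]])
  obtain N
    where "(1 - fps_X) ^ Suc k * (fps_XD ^^ k) (inverse (1 - fps_X :: complex fps)) = fps_of_poly N"
    using fps_XD_power_inverse_one_minus_X_rational by blast
  then have "map_poly complex_of_real A * [:1, -1:] ^ Suc k
      = smult C N * map_poly complex_of_real B"
    by (rule poly_identity_of_fps_identity[OF fps_complexify_rational[OF FB] _ series])
  then have "poles_rf A B \<subseteq> {1}" by (rule poles_rf_subset_one[OF assms(2)])
  with series lam show ?thesis unfolding F_def by blast
qed

end
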